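(* Let $q=AB$ be a two-atom query over $R$ satisfying the standing assumption below and the zig-zag property. For every database $D$, every repair $r$ of $D$ and all facts $a,b$: if $r\models q(ab)$ then $\{a\}\in\Delta_2(q,D)$ or there exists a repair $s$ of $D$ such that $q(s)\subsetneq q(r)$.
   Context: $R$ is a relation symbol of arity $k\ge1$ whose first $l$ positions form its primary key. Facts $R(\bar a)$, atoms $R(\bar x)$; $\overline{\mathrm{key}}(t)$ is the tuple of the first $l$ entries of $t$; $a\sim b$ iff $\overline{\mathrm{key}}(a)=\overline{\mathrm{key}}(b)$. A database is a finite set of facts; a block is a maximal set of pairwise key-equal facts; a repair is a $\subseteq$-maximal subset with no two distinct key-equal facts. For a set of facts $S$, a solution of $q$ in $S$ is a pair $(\mu(A),\mu(B))$ with $\mu$ a mapping from variables to elements and $\mu(A),\mu(B)\in S$; $q(S)$ is the set of solutions and $S\models q(ab)$ means $(a,b)\in q(S)$; $S$ satisfies $q$ if $q(S)\neq\emptyset$. Zig-zag property: for every database $D$ and facts $a,b,b',c$ of $D$ with $a\not\sim c$, $a\ne b$, $b\sim b'$, if $D\models q(ab)$ and $D\models q(cb')$ then $D\models q(ab')$. Greedy fixpoint: a $k$-set of $D$ is $S\subseteq D$ with $|S|\le k$ and at most one fact per block; $\Delta_k(q,D)$ is the least set of $k$-sets containing every $k$-set satisfying $q$ and containing a $k$-set $S$ whenever some block $B$ of $D$ is such that for every $u\in B$ some $S'\subseteq S\cup\{u\}$ lies in $\Delta_k(q,D)$. Standing assumption: $\overline{\mathrm{key}}(A)\ne\overline{\mathrm{key}}(B)$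 and $q$ is not equivalent over all consistent databases to a single-atom query. *)

theory Defs
  imports Main
begin

text \<open>Facts of the relation R (arity k) are lists of elements of length k;
  atoms are lists of variables of length k. The primary key consists of
  the first l positions.\<close>

definition key :: "nat \<Rightarrow> 'a list \<Rightarrow> 'a list" where
  "key l t = take l t"

definition database :: "nat \<Rightarrow> 'e list set \<Rightarrow> bool" where
  "database k D \<longleftrightarrow> finite D \<and> (\<forall>t\<in>D. length t = k)"

definition consistent :: "nat \<Rightarrow> 'e list set \<Rightarrow> bool" where
  "consistent l S \<longleftrightarrow> (\<forall>a\<in>S. \<forall>b\<in>S. key l a = key l b \<longrightarrow> a = b)"

definition blocks :: "nat \<Rightarrow> 'e list set \<Rightarrow> 'e list set set" where
  "blocks l D = {{b\<in>D. key l b = key l a} | a. a \<in> D}"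

definition repair :: "nat \<Rightarrow> 'e list set \<Rightarrow> 'e list set \<Rightarrow> bool" where
  "repair l D r \<longleftrightarrow> r \<subseteq> D \<and> consistent l r \<and>
     (\<forall>r'. r \<subseteq> r' \<longrightarrow> r' \<subseteq> D \<longrightarrow> consistent l r' \<longrightarrow> r' = r)"

definition qsol :: "'v list \<Rightarrow> 'v list \<Rightarrow> 'e list set \<Rightarrow> ('e list \<times> 'e list) set" where
  "qsol A B S = {(map \<mu> A, map \<mu> B) | \<mu>. map \<mu> A \<in> S \<and> map \<mu> B \<in> S}"

definition zigzag :: "nat \<Rightarrow> nat \<Rightarrow> 'v list \<Rightarrow> 'v list \<Rightarrow> 'e itself \<Rightarrow> bool" where
  "zigzag k l A B _ \<longleftrightarrow>
     (\<forall>(D::'e list set) a b b' c. database k D \<longrightarrow>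
        a \<in> D \<longrightarrow> b \<in> D \<longrightarrow> b' \<in> D \<longrightarrow> c \<in> D \<longrightarrow>
        key l a \<noteq> key l c \<longrightarrow> a \<noteq> b \<longrightarrow> key l b = key l b' \<longrightarrow>
        (a, b) \<in> qsol A B D \<longrightarrow> (c, b') \<in> qsol A B D \<longrightarrow> (a, b') \<in> qsol A B D)"

definition equiv_single_atom :: "nat \<Rightarrow> nat \<Rightarrow> 'v list \<Rightarrow> 'v list \<Rightarrow> 'e itself \<Rightarrow> bool" where
  "equiv_single_atom k l A B _ \<longleftrightarrow>
     (\<exists>z :: nat list. length z = k \<and>
        (\<forall>D :: 'e list set. database k D \<longrightarrow> consistent l D \<longrightarrow>
           (qsol A B D \<noteq> {} \<longleftrightarrow> (\<exists>\<mu>. map \<mu> z \<in> D))))"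

definition kset :: "nat \<Rightarrow> nat \<Rightarrow> 'e list set \<Rightarrow> 'e list set \<Rightarrow> bool" where
  "kset n l D S \<longleftrightarrow> S \<subseteq> D \<and> card S \<le> n \<and> consistent l S"

inductive_set Delta :: "nat \<Rightarrow> nat \<Rightarrow> 'v list \<Rightarrow> 'v list \<Rightarrow> 'e list set \<Rightarrow> 'e list set set"
  for n l A B D where
  base: "kset n l D S \<Longrightarrow> qsol A B S \<noteq> {} \<Longrightarrow> S \<in> Delta n l A B D"
| step: "kset n l D S \<Longrightarrow> Bl \<in> blocks l D \<Longrightarrow>
         (\<forall>u\<in>Bl. \<exists>S'. S' \<subseteq> S \<union> {u} \<and> S' \<in> Delta n l A B D) \<Longrightarrow> S \<in> Delta n l A B D"

end

theory Submission
  imports Defs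
begin

(*
  Suppose {a} is not in Delta_2. We collect a consistent set N of new facts, each n in N
  lying in the block of some y in r such that (t, y) is a solution but (t, n) is not, for
  some t in {a} union N; the facts are supplied by the failing fixpoint rule for {a, t}, which
  also keeps {a, n} out of Delta_2. Take N maximal and let s be r with the blocks of N
  replaced by N. No solution (x, n) of s ends in N, since zig-zag applied to (t, y) and
  (x, n) would give (t, n). No solution (n, z) starts in N: z = a would put {a, n} into
  Delta_2, and z in r would let the fixpoint rule for {a, n} extend N into the block of z.
  So q(s) is contained in q(r), and (a, b) is lost because, by maximality, the block of b is
  replaced.
*)

definition matches :: "'v list \<Rightarrow> 'v list \<Rightarrow> 'e list \<Rightarrow> 'e list \<Rightarrow> bool" where
  "matches A B x y \<longleftrightarrow> (\<exists>\<mu>. map \<mu> A = x \<and> map \<mu> B = y)"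

lemma mem_qsol_iff: "(x, y) \<in> qsol A B S \<longleftrightarrow> x \<in> S \<and> y \<in> S \<and> matches A B x y"
  by (auto simp: qsol_def matches_def)

lemma zigzag_matches:
  assumes "zigzag k l A B TYPE('e)" and "database k (D :: 'e list set)"
    and "a \<in> D" "b \<in> D" "b' \<in> D" "c \<in> D"
    and "key l a \<noteq> key l c" "a \<noteq> b" "key l b = key l b'"
    and "matches A B a b" "matches A B c b'"
  shows "matches A B a b'"
  using assms unfolding zigzag_def by (simp add: mem_qsol_iff)

lemma consistentD: "consistent l S \<Longrightarrow> x \<in> S \<Longrightarrow> y \<in> S \<Longrightarrow> key l x = key l y \<Longrightarrow> x = y"
  unfolding consistent_def by blast

lemma consistent_insert:
  "consistent l (insert x S) \<longleftrightarrow> consistent l S \<and> (\<forall>y\<in>S. key l y = key l x \<longrightarrow> y = x)"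
  unfolding consistent_def by auto

lemma repair_iff_keys:
  "repair l D s \<longleftrightarrow> s \<subseteq> D \<and> consistent l s \<and> key l ` D \<subseteq> key l ` s"
proof
  assume s: "repair l D s"
  then have "s \<subseteq> D" "consistent l s"
    by (simp_all add: repair_def)
  have "key l d \<in> key l ` s" if "d \<in> D" for d
  proof (rule ccontr)
    assume "key l d \<notin> key l ` s"
    with \<open>consistent l s\<close> have "consistent l (insert d s)"
      unfolding consistent_insert by (metis imageI)
    then have "insert d s = s"
      using s \<open>d \<in> D\<close> unfolding repair_def by blast
    with \<open>key l d \<notin> key l ` s\<close> show False by blast
  qed
  with \<open>s \<subseteq> D\<close> \<open>consistent l s\<close> show "s \<subseteq> D \<and> consistent l s \<and> key l ` D \<subseteq> key l ` s"
    by blast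
next
  assume s: "s \<subseteq> D \<and> consistent l s \<and> key l ` D \<subseteq> key l ` s"
  have "r' \<subseteq> s" if "s \<subseteq> r'" "r' \<subseteq> D" "consistent l r'" for r'
  proof
    fix d assume "d \<in> r'"
    with s \<open>r' \<subseteq> D\<close> have "key l d \<in> key l ` s" by blast
    then obtain x where "x \<in> s" "key l x = key l d" by (metis imageE)
    with that \<open>d \<in> r'\<close> have "x = d" by (blast dest: consistentD)
    with \<open>x \<in> s\<close> show "d \<in> s" by simp
  qed
  with s show "repair l D s"
    unfolding repair_def by blast
qed

definition replace_blocks :: "nat \<Rightarrow> 'e list set \<Rightarrow> 'e list set \<Rightarrow> 'e list set" where
  "replace_blocks l r N = {x \<in> r. key l x \<notin> key l ` N} \<union> N"

lemma consistent_replace_blocks: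
  "consistent l r \<Longrightarrow> consistent l N \<Longrightarrow> consistent l (replace_blocks l r N)"
  unfolding consistent_def replace_blocks_def by (auto simp: image_iff)

lemma keys_subset_replace_blocks: "key l ` r \<subseteq> key l ` replace_blocks l r N"
proof
  fix k assume "k \<in> key l ` r"
  then obtain x where "x \<in> r" "k = key l x" by blast
  then show "k \<in> key l ` replace_blocks l r N"
    unfolding replace_blocks_def by (cases "key l x \<in> key l ` N") auto
qed

lemma repair_replace_blocks:
  assumes "repair l D r" "N \<subseteq> D" "consistent l N"
  shows "repair l D (replace_blocks l r N)"
  unfolding repair_iff_keys
proof (intro conjI)
  show "replace_blocks l r N \<subseteq> D"
    using assms(1,2) unfolding repair_def replace_blocks_def by blast
  show "consistent l (replace_blocks l r N)"
    using assms(1,3) unfolding repair_def by (blast intro: consistent_replace_blocks)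
  have "key l ` D \<subseteq> key l ` r"
    using assms(1) by (simp add: repair_iff_keys)
  then show "key l ` D \<subseteq> key l ` replace_blocks l r N"
    using keys_subset_replace_blocks by (rule subset_trans)
qed

lemma kset_pair:
  "x \<in> D \<Longrightarrow> y \<in> D \<Longrightarrow> x = y \<or> key l x \<noteq> key l y \<Longrightarrow> kset 2 l D {x, y}"
  by (auto simp: kset_def consistent_def card_insert_if)

lemma Delta_pair:
  assumes "x \<in> D" "y \<in> D" "x = y \<or> key l x \<noteq> key l y" "matches A B x y"
  shows "{x, y} \<in> Delta 2 l A B D"
proof (rule Delta.base)
  show "kset 2 l D {x, y}"
    using assms(1-3) by (rule kset_pair)
  have "(x, y) \<in> qsol A B {x, y}"
    using assms(4) by (simp add: mem_qsol_iff)
  then show "qsol A B {x, y} \<noteq> {}" by blast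
qed

lemma not_Delta_block_choice:
  assumes "kset n l D S" "S \<notin> Delta n l A B D" "d \<in> D"
  shows "\<exists>u\<in>D. key l u = key l d \<and> (\<forall>S' \<subseteq> insert u S. S' \<notin> Delta n l A B D)"
proof (rule ccontr)
  assume "\<not> ?thesis"
  then have "\<forall>u\<in>{b\<in>D. key l b = key l d}. \<exists>S'. S' \<subseteq> S \<union> {u} \<and> S' \<in> Delta n l A B D"
    by auto
  moreover have "{b\<in>D. key l b = key l d} \<in> blocks l D"
    using assms(3) unfolding blocks_def by blast
  ultimately show False
    using assms(1,2) Delta.step by blast
qed

locale fact_outside_Delta =
  fixes l :: nat and A B :: "'v list" and D r :: "'e list set" and a :: "'e list"
  assumes repair: "repair l D r"
    and a_in_r: "a \<in> r"
    and a_not_Delta: "{a} \<notin> Delta 2 l A B D"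
begin

lemma r_subset_D: "r \<subseteq> D" and consistent_r: "consistent l r"
  using repair by (simp_all add: repair_def)

definition replacement :: "'e list set \<Rightarrow> bool" where
  "replacement N \<longleftrightarrow> N \<subseteq> D \<and> consistent l N \<and>
     (\<forall>n\<in>N. key l n \<noteq> key l a \<and> {a, n} \<notin> Delta 2 l A B D \<and>
        (\<exists>t\<in>insert a N. \<exists>y\<in>r. key l y = key l n \<and> t \<noteq> y \<and>
           matches A B t y \<and> \<not> matches A B t n))"

lemma replacement_empty: "replacement {}"
  by (simp add: replacement_def consistent_def)

lemma replacement_disjoint:
  assumes "replacement N" "n \<in> N"
  shows "n \<notin> r"
proof
  assume "n \<in> r"
  from assms obtain t y where "y \<in> r" "key l y = key l n" "matches A B t y" "\<not> matches A B t n"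
    unfolding replacement_def by blast
  with \<open>n \<in> r\<close> consistent_r show False
    by (metis consistentD)
qed

lemma a_in_replace_blocks: "replacement N \<Longrightarrow> a \<in> replace_blocks l r N"
  using a_in_r by (auto simp: replacement_def replace_blocks_def)

lemma replacement_insert:
  assumes N: "replacement N"
    and n: "n \<in> D" "key l n \<noteq> key l a" "key l n \<notin> key l ` N" "{a, n} \<notin> Delta 2 l A B D"
    and witness: "t \<in> insert a N" "y \<in> r" "key l y = key l n" "t \<noteq> y"
      "matches A B t y" "\<not> matches A B t n"
  shows "replacement (insert n N)"
  unfolding replacement_def
proof (intro conjI)
  show "insert n N \<subseteq> D" "consistent l (insert n N)"
    using N n unfolding replacement_def consistent_insert by (auto simp: image_iff)
  show "\<forall>m\<in>insert n N. key l m \<noteq> key l a \<and> {a, m} \<notin> Delta 2 l A B D \<and>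
    (\<exists>t\<in>insert a (insert n N). \<exists>y\<in>r. key l y = key l m \<and> t \<noteq> y \<and>
       matches A B t y \<and> \<not> matches A B t m)"
  proof
    fix m assume "m \<in> insert n N"
    then show "key l m \<noteq> key l a \<and> {a, m} \<notin> Delta 2 l A B D \<and>
      (\<exists>t\<in>insert a (insert n N). \<exists>y\<in>r. key l y = key l m \<and> t \<noteq> y \<and>
         matches A B t y \<and> \<not> matches A B t m)"
    proof
      assume "m = n"
      with n witness show ?thesis by blast
    next
      assume "m \<in> N"
      with N show ?thesis unfolding replacement_def by blast
    qed
  qed
qed

lemma replacement_extend:
  assumes N: "replacement N"
    and t: "t \<in> insert a N" and y: "y \<in> r" "t \<noteq> y" "matches A B t y"
    and key_y: "key l y \<noteq> key l a" "key l y \<notin> key l ` N"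
  shows "\<exists>y'. y' \<notin> N \<and> replacement (insert y' N)"
proof -
  have "t \<in> D" "t = a \<or> key l a \<noteq> key l t" "{a, t} \<notin> Delta 2 l A B D"
    using t N a_in_r r_subset_D a_not_Delta unfolding replacement_def by auto
  then have "kset 2 l D {a, t}"
    using a_in_r r_subset_D by (auto intro: kset_pair)
  then obtain y' where "y' \<in> D" and key_y': "key l y' = key l y"
    and not_Delta: "\<forall>S' \<subseteq> insert y' {a, t}. S' \<notin> Delta 2 l A B D"
    using not_Delta_block_choice \<open>{a, t} \<notin> Delta 2 l A B D\<close> y r_subset_D by blast
  have "key l t \<noteq> key l y'"
    using t key_y key_y' by (metis image_eqI insert_iff)
  then have "\<not> matches A B t y'"
    using Delta_pair[of t D y' l A B] \<open>t \<in> D\<close> \<open>y' \<in> D\<close> not_Delta[rule_format, of "{t, y'}"] by auto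
  moreover have "{a, y'} \<notin> Delta 2 l A B D"
    using not_Delta[rule_format, of "{a, y'}"] by auto
  ultimately have "replacement (insert y' N)"
    using replacement_insert N t y key_y key_y' \<open>y' \<in> D\<close> by simp
  moreover have "y' \<notin> N"
    using key_y key_y' by (metis image_eqI)
  ultimately show ?thesis by blast
qed

definition maximal_replacement :: "'e list set \<Rightarrow> bool" where
  "maximal_replacement M \<longleftrightarrow> replacement M \<and> (\<forall>y. y \<notin> M \<longrightarrow> \<not> replacement (insert y M))"

lemma ex_maximal_replacement:
  assumes "finite D"
  obtains M where "maximal_replacement M"
proof -
  have "{N. replacement N} \<subseteq> Pow D"
    by (auto simp: replacement_def)
  with assms have "finite {N. replacement N}"
    by (simp add: finite_subset)
  then obtain M where M: "replacement M"
    and max: "\<forall>N\<in>{N. replacement N}. M \<subseteq> N \<longrightarrow> M = N"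
    using finite_has_maximal[of "{N. replacement N}"] replacement_empty by blast
  have "\<not> replacement (insert y M)" if "y \<notin> M" for y
    using max that by blast
  with M show thesis
    using that unfolding maximal_replacement_def by blast
qed

lemma maximal_replacement_key:
  assumes "maximal_replacement M"
    and "t \<in> insert a M" "y \<in> r" "t \<noteq> y" "matches A B t y" "key l y \<noteq> key l a"
  shows "key l y \<in> key l ` M"
  using assms replacement_extend unfolding maximal_replacement_def by blast

lemma replacement_no_match_into:
  assumes zigzag: "zigzag k l A B TYPE('e)" and "database k D"
    and N: "replacement N" and "y \<in> N" and x: "x \<in> replace_blocks l r N"
  shows "\<not> matches A B x y"
proof
  assume "matches A B x y"
  from N \<open>y \<in> N\<close> obtain t y0 where t: "t \<in> insert a N" and "y0 \<in> r" "key l y0 = key l y"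
    "t \<noteq> y0" "matches A B t y0" and not_t_y: "\<not> matches A B t y"
    unfolding replacement_def by blast
  have "t \<in> replace_blocks l r N"
    using t a_in_replace_blocks[OF N] by (auto simp: replace_blocks_def)
  have s_D: "replace_blocks l r N \<subseteq> D"
    using N r_subset_D by (auto simp: replacement_def replace_blocks_def)
  show False
  proof (cases "key l t = key l x")
    case True
    have "consistent l (replace_blocks l r N)"
      using N consistent_r by (simp add: replacement_def consistent_replace_blocks)
    with True x \<open>t \<in> replace_blocks l r N\<close> have "t = x"
      by (blast dest: consistentD)
    with \<open>matches A B x y\<close> not_t_y show False by simp
  next
    case False
    have "matches A B t y"
      using zigzag_matches[OF zigzag \<open>database k D\<close>, of t y0 y x] False s_D x
        \<open>t \<in> replace_blocks l r N\<close> \<open>y0 \<in> r\<close> r_subset_D \<open>y \<in> N\<close> N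
        \<open>key l y0 = key l y\<close> \<open>t \<noteq> y0\<close> \<open>matches A B t y0\<close> \<open>matches A B x y\<close>
      unfolding replacement_def by blast
    with not_t_y show False ..
  qed
qed

lemma maximal_replacement_no_match_from:
  assumes zigzag: "zigzag k l A B TYPE('e)" and "database k D"
    and M: "maximal_replacement M" and "n \<in> M" and z: "z \<in> replace_blocks l r M"
  shows "\<not> matches A B n z"
proof
  assume "matches A B n z"
  have M_rep: "replacement M"
    using M by (simp add: maximal_replacement_def)
  consider "z \<in> M" | "z = a" | "z \<in> r" "z \<noteq> a" "key l z \<notin> key l ` M"
    using z unfolding replace_blocks_def by blast
  then show False
  proof cases
    case 1
    have "n \<in> replace_blocks l r M"
      using \<open>n \<in> M\<close> by (simp add: replace_blocks_def)
    with 1 show False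
      using replacement_no_match_into[OF zigzag \<open>database k D\<close> M_rep] \<open>matches A B n z\<close> by blast
  next
    case 2
    have "n \<in> D" "key l n \<noteq> key l a" "{a, n} \<notin> Delta 2 l A B D"
      using M_rep \<open>n \<in> M\<close> unfolding replacement_def by auto
    with 2 show False
      using Delta_pair[of n D a l A B] a_in_r r_subset_D \<open>matches A B n z\<close>
      by (auto simp: insert_commute)
  next
    case 3
    have "key l z \<noteq> key l a"
      using 3 a_in_r consistent_r by (blast dest: consistentD)
    moreover have "n \<noteq> z"
      using replacement_disjoint[OF M_rep \<open>n \<in> M\<close>] 3 by blast
    ultimately have "key l z \<in> key l ` M"
      using maximal_replacement_key[OF M] \<open>n \<in> M\<close> 3 \<open>matches A B n z\<close> by blast
    with 3 show False by blast
  qed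
qed

lemma qsol_replace_blocks_subset:
  assumes "zigzag k l A B TYPE('e)" "database k D" "maximal_replacement M"
  shows "qsol A B (replace_blocks l r M) \<subseteq> qsol A B r"
proof (rule subrelI)
  fix x y
  assume "(x, y) \<in> qsol A B (replace_blocks l r M)"
  then have x: "x \<in> replace_blocks l r M" and y: "y \<in> replace_blocks l r M"
    and "matches A B x y"
    by (simp_all add: mem_qsol_iff)
  have "x \<notin> M"
    using maximal_replacement_no_match_from[OF assms _ y] \<open>matches A B x y\<close> by blast
  moreover have "y \<notin> M"
    using replacement_no_match_into[OF assms(1,2) _ _ x] assms(3) \<open>matches A B x y\<close>
    unfolding maximal_replacement_def by blast
  ultimately show "(x, y) \<in> qsol A B r"
    using x y \<open>matches A B x y\<close> by (simp add: mem_qsol_iff replace_blocks_def)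
qed

lemma ex_repair_with_fewer_solutions:
  assumes "zigzag k l A B TYPE('e)" "database k D" and ab: "(a, b) \<in> qsol A B r"
  shows "\<exists>s. repair l D s \<and> qsol A B s \<subset> qsol A B r"
proof -
  obtain M where M: "maximal_replacement M"
    using ex_maximal_replacement \<open>database k D\<close> by (auto simp: database_def)
  then have M_rep: "replacement M"
    by (simp add: maximal_replacement_def)
  have "b \<in> r" "matches A B a b"
    using ab by (simp_all add: mem_qsol_iff)
  have "key l b \<noteq> key l a"
  proof
    assume "key l b = key l a"
    then have "b = a"
      using \<open>b \<in> r\<close> a_in_r consistent_r by (blast dest: consistentD)
    then have "{a, a} \<in> Delta 2 l A B D"
      using Delta_pair[of a D a l A B] a_in_r r_subset_D \<open>matches A B a b\<close> by blast
    with a_not_Delta show False by simp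
  qed
  then have "key l b \<in> key l ` M"
    using maximal_replacement_key[OF M, of a b] \<open>b \<in> r\<close> \<open>matches A B a b\<close> by auto
  moreover have "b \<notin> M"
    using replacement_disjoint[OF M_rep] \<open>b \<in> r\<close> by blast
  ultimately have "(a, b) \<notin> qsol A B (replace_blocks l r M)"
    by (simp add: mem_qsol_iff replace_blocks_def)
  moreover have "repair l D (replace_blocks l r M)"
    using repair_replace_blocks[OF repair] M_rep by (simp add: replacement_def)
  ultimately show ?thesis
    using qsol_replace_blocks_subset[OF assms(1,2) M] ab by blast
qed

end

theorem lemma6p3:
  fixes k l :: nat and A B :: "'v list" and D r :: "'e list set" and a b :: "'e list"
  assumes "k \<ge> 1" and "l \<le> k"
    and "length A = k" and "length B = k"
    and "key l A \<noteq> key l B"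
    and "\<not> equiv_single_atom k l A B TYPE('e)"
    and "zigzag k l A B TYPE('e)"
    and "infinite (UNIV :: 'e set)"
    and "database k D"
    and "repair l D r"
    and "(a, b) \<in> qsol A B r"
  shows "{a} \<in> Delta 2 l A B D \<or> (\<exists>s. repair l D s \<and> qsol A B s \<subset> qsol A B r)"
proof (cases "{a} \<in> Delta 2 l A B D")
  case False
  have "a \<in> r"
    using assms(11) by (simp add: mem_qsol_iff)
  with assms(10) False interpret fact_outside_Delta l A B D r a
    by unfold_locales
  show ?thesis
    using ex_repair_with_fewer_solutions assms(7,9,11) by blast
qed simp

end
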